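(* Let $g\ge 0$ and $n\ge 1$. The number of pseudo-3-regular graphs corresponding to (pants decompositions of) hyperbolic surfaces of genus $g$ with $n$ cusps is at most $n\,g^{3g}(3g-3+3n)^n$.
   Context: A pants decomposition of a finite-area hyperbolic surface of genus $g$ with $n$ cusps is a collection of disjoint simple closed geodesics whose complement is a disjoint union of pairs of pants (spheres with three holes, each hole being a boundary geodesic or a cusp). A connected graph with free edges (edges having a free, unattached end) is pseudo-3-regular if every node has exactly three emanating half-edges (a loop counts twice), which may or may not have a free end. The graph corresponding to a pants decomposition has one node per pair of pants, one half-edge per boundary component or cusp of that pair of pants; two half-edges are joined into an edge when the corresponding boundary geodesics are glued in the surface, and half-edges corresponding to cusps are free edges. *)

theory Defs
  imports Main
begin

text \<open>A graph with free edges, given by half-edges: a finite node set V, a finite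
 half-edge set H, a map node assigning each half-edge its node, and an involution
 pair on H gluing two half-edges into an edge; a fixed point of pair is a half-edge
 with a free (unattached) end, i.e. a free edge. A loop consists of two half-edges
 at the same node and hence counts twice.\<close>

type_synonym hgraph = "nat set \<times> nat set \<times> (nat \<Rightarrow> nat) \<times> (nat \<Rightarrow> nat)"

definition wf_hgraph :: "hgraph \<Rightarrow> bool" where
  "wf_hgraph G = (case G of (V, H, node, pair) \<Rightarrow>
     finite V \<and> finite H \<and> (\<forall>x\<in>H. node x \<in> V) \<and>
     (\<forall>x\<in>H. pair x \<in> H \<and> pair (pair x) = x))"

definition adjacent :: "hgraph \<Rightarrow> (nat \<times> nat) set" where
  "adjacent G = (case G of (V, H, node, pair) \<Rightarrow>
     {(node x, node (pair x)) | x. x \<in> H})"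

definition connected_hgraph :: "hgraph \<Rightarrow> bool" where
  "connected_hgraph G = (case G of (V, H, node, pair) \<Rightarrow>
     V \<noteq> {} \<and> (\<forall>u\<in>V. \<forall>v\<in>V. (u, v) \<in> (adjacent G)\<^sup>*))"

definition pseudo_3_regular :: "hgraph \<Rightarrow> bool" where
  "pseudo_3_regular G = (case G of (V, H, node, pair) \<Rightarrow>
     wf_hgraph G \<and> connected_hgraph G \<and> (\<forall>v\<in>V. card {x\<in>H. node x = v} = 3))"

definition free_edges :: "hgraph \<Rightarrow> nat set" where
  "free_edges G = (case G of (V, H, node, pair) \<Rightarrow> {x\<in>H. pair x = x})"

definition nodes :: "hgraph \<Rightarrow> nat set" where
  "nodes G = fst G"

text \<open>A pseudo-3-regular graph corresponds to a pants decomposition of a finite-area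
 hyperbolic surface of genus g with n cusps iff it has n free edges and 2g-2+n nodes
 (one node per pair of pants; a surface of signature (g,n) has 2g-2+n pants).\<close>

definition surface_graph :: "nat \<Rightarrow> nat \<Rightarrow> hgraph \<Rightarrow> bool" where
  "surface_graph g n G \<longleftrightarrow> pseudo_3_regular G \<and> card (free_edges G) = n \<and>
     int (card (nodes G)) = 2 * int g - 2 + int n"

definition hgraph_iso :: "hgraph \<Rightarrow> hgraph \<Rightarrow> bool" where
  "hgraph_iso G1 G2 = (case G1 of (V1, H1, node1, pair1) \<Rightarrow> case G2 of (V2, H2, node2, pair2) \<Rightarrow>
     (\<exists>f h. bij_betw f V1 V2 \<and> bij_betw h H1 H2 \<and>
        (\<forall>x\<in>H1. node2 (h x) = f (node1 x) \<and> pair2 (h x) = h (pair1 x))))"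

definition num_surface_graphs :: "nat \<Rightarrow> nat \<Rightarrow> nat" where
  "num_surface_graphs g n =
     card ({G. surface_graph g n G} // {(G1, G2). hgraph_iso G1 G2})"

end

(*
  Number the pants of a pants decomposition 0, ..., k - 1, where k = 2g - 2 + n, and the three
  half-edges at pants v as 3v, 3v + 1, 3v + 2. A graph is then an involution p of {0..<3k} whose
  n fixed points are the cusps. Since the graph is connected, the pants can be renumbered in
  breadth-first order: pants j >= 1 is attached through its half-edge 3j to the least half-edge of
  the pants 0, ..., j - 1 that leaves them, and these partners p(3j) increase with j. Such a normal
  form is determined by the set of the k - 1 partners, chosen among the 2k + 1 half-edges other than
  the 3j, and by an involution with n fixed points on the remaining k + 2 = n + 2g half-edges, of
  which there are at most (n + 2g)! / (n! 2^g g!). Hence there are at most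
  (2k + 1)! / ((k - 1)! n! 2^g g!) isomorphism classes, and an induction on n and g bounds this
  number by n g^(3g) (3g + 3n - 3)^n.
*)

theory Submission
  imports Defs Complex_Main "HOL-Combinatorics.Permutations"
begin

section \<open>Involutions with a given number of fixed points\<close>

definition involutions :: "'a set \<Rightarrow> nat \<Rightarrow> ('a \<Rightarrow> 'a) set" where
  "involutions S m = {q. (\<forall>x. x \<notin> S \<longrightarrow> q x = x) \<and> (\<forall>x\<in>S. q x \<in> S \<and> q (q x) = x) \<and>
    card {x\<in>S. q x = x} = m}"

lemma involution_permutes:
  assumes "\<forall>x. x \<notin> S \<longrightarrow> q x = x" and "\<forall>x\<in>S. q x \<in> S \<and> q (q x) = x"
  shows "q permutes S"
  using assms by (intro bij_imp_permutes bij_betw_byWitness[where f' = q]) auto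

lemma finite_involutions: "finite S \<Longrightarrow> finite (involutions S m)"
  by (rule finite_subset[OF _ finite_permutations]) (auto simp: involutions_def involution_permutes)

lemma involutions_empty_if_card_less:
  assumes "finite S" "card S < m"
  shows "involutions S m = {}"
proof -
  have "m \<le> card S" if "q \<in> involutions S m" for q
    using that assms(1) by (auto simp: involutions_def intro: card_mono)
  then show ?thesis using assms(2) by fastforce
qed

lemma involutions_fixing_point_pos:
  assumes "finite S" "q \<in> involutions S m" "a \<in> S" "q a = a"
  shows "m \<noteq> 0"
  using assms by (auto simp: involutions_def card_gt_0_iff)

lemma involutions_fixing_point_subset:
  assumes "a \<in> S"
  shows "{q \<in> involutions S m. q a = a} \<subseteq> involutions (S - {a}) (m - 1)"
proof
  fix q assume "q \<in> {q \<in> involutions S m. q a = a}"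
  then have q: "\<forall>x. x \<notin> S \<longrightarrow> q x = x" "\<forall>x\<in>S. q x \<in> S \<and> q (q x) = x"
    "card {x\<in>S. q x = x} = m" "q a = a"
    by (auto simp: involutions_def)
  have "{x \<in> S - {a}. q x = x} = {x\<in>S. q x = x} - {a}" by auto
  then have "card {x \<in> S - {a}. q x = x} = m - 1"
    using q(3,4) assms card_Diff_singleton[of a "{x\<in>S. q x = x}"] by simp
  moreover have "q x \<noteq> a" if "x \<in> S - {a}" for x using q(2,4) that by force
  ultimately show "q \<in> involutions (S - {a}) (m - 1)" using q by (auto simp: involutions_def)
qed

lemma involutions_pairing_points:
  assumes "a \<in> S" "b \<in> S" "a \<noteq> b"
  defines "unpair \<equiv> \<lambda>q. q(a := a, b := b)"
  shows "inj_on unpair {q \<in> involutions S m. q a = b}"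
    and "unpair ` {q \<in> involutions S m. q a = b} \<subseteq> involutions (S - {a, b}) m"
proof -
  have qb: "q b = a" if "q \<in> involutions S m" "q a = b" for q
    using that assms(1) by (auto simp: involutions_def)
  show "inj_on unpair {q \<in> involutions S m. q a = b}"
  proof (rule inj_onI)
    fix q1 q2 assume q1: "q1 \<in> {q \<in> involutions S m. q a = b}"
      and q2: "q2 \<in> {q \<in> involutions S m. q a = b}" and eq: "unpair q1 = unpair q2"
    show "q1 = q2"
    proof
      fix x
      show "q1 x = q2 x"
      proof (cases "x = a \<or> x = b")
        case True
        then show ?thesis using q1 q2 qb[of q1] qb[of q2] by auto
      next
        case False
        then show ?thesis using fun_cong[OF eq, of x] by (simp add: unpair_def)
      qed
    qed
  qed
  show "unpair ` {q \<in> involutions S m. q a = b} \<subseteq> involutions (S - {a, b}) m"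
  proof (rule image_subsetI)
    fix q assume "q \<in> {q \<in> involutions S m. q a = b}"
    then have q: "q \<in> involutions S m" "q a = b" by simp_all
    then have "{x \<in> S - {a, b}. unpair q x = x} = {x\<in>S. q x = x}"
      using qb[OF q] assms(3) by (auto simp: unpair_def)
    moreover have "q x \<noteq> a \<and> q x \<noteq> b" if "x \<in> S - {a, b}" for x
      using q qb[OF q] that by (auto simp: involutions_def)
    ultimately show "unpair q \<in> involutions (S - {a, b}) m"
      using q by (auto simp: involutions_def unpair_def)
  qed
qed

lemma card_involutions_recurrence:
  assumes S: "finite S" and a: "a \<in> S"
  shows "card (involutions S m) \<le> (if m = 0 then 0 else card (involutions (S - {a}) (m - 1)))
           + (\<Sum>b\<in>S - {a}. card (involutions (S - {a, b}) m))"
proof -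
  define X where "X b = {q \<in> involutions S m. q a = b}" for b
  have finite_X: "finite (X b)" for b
    using finite_involutions[OF S] by (simp add: X_def)
  have "involutions S m \<subseteq> X a \<union> (\<Union>b\<in>S - {a}. X b)"
    using a by (auto simp: X_def involutions_def)
  then have "card (involutions S m) \<le> card (X a \<union> (\<Union>b\<in>S - {a}. X b))"
    using finite_X S by (intro card_mono) auto
  also have "\<dots> \<le> card (X a) + card (\<Union>b\<in>S - {a}. X b)" by (rule card_Un_le)
  also have "\<dots> \<le> card (X a) + (\<Sum>b\<in>S - {a}. card (X b))"
    using card_UN_le[of "S - {a}" X] S by simp
  also have "\<dots> \<le> (if m = 0 then 0 else card (involutions (S - {a}) (m - 1)))
      + (\<Sum>b\<in>S - {a}. card (involutions (S - {a, b}) m))"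
  proof (intro add_mono sum_mono)
    show "card (X a) \<le> (if m = 0 then 0 else card (involutions (S - {a}) (m - 1)))"
    proof (cases "m = 0")
      case True
      then have "X a = {}" using involutions_fixing_point_pos[OF S _ a] by (auto simp: X_def)
      then show ?thesis by simp
    next
      case False
      have "X a \<subseteq> involutions (S - {a}) (m - 1)"
        using involutions_fixing_point_subset[OF a] by (simp add: X_def)
      then show ?thesis using False S by (simp add: card_mono finite_involutions)
    qed
    fix b assume "b \<in> S - {a}"
    then have "a \<in> S" "b \<in> S" "a \<noteq> b" using a by auto
    then show "card (X b) \<le> card (involutions (S - {a, b}) m)"
      unfolding X_def using S
      by (intro card_inj_on_le[OF involutions_pairing_points[OF \<open>a \<in> S\<close> \<open>b \<in> S\<close> \<open>a \<noteq> b\<close>]]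
          finite_involutions) simp
  qed
  finally show ?thesis .
qed

lemma fact_ge_split:
  assumes "s = m + 2 * g" "s \<ge> 1"
  shows "m * fact (s - 1) + (s - 1) * (2 * g * fact (s - 2)) \<le> (fact s :: nat)"
proof -
  have "(s - 1) * fact (s - 2) \<le> (fact (s - 1) :: nat)"
    using fact_reduce[of "s - 1", where 'a = nat] by (cases "s - 1 = 0") (simp_all add: numeral_2_eq_2)
  from mult_le_mono2[OF this, of "2 * g"]
  have "m * fact (s - 1) + (s - 1) * (2 * g * fact (s - 2)) \<le> (m + 2 * g) * fact (s - 1)"
    unfolding add_mult_distrib by (simp add: ac_simps)
  also have "\<dots> = fact s" using assms fact_reduce[of s, where 'a = nat] by (simp only:) simp
  finally show ?thesis .
qed

lemma card_involutions_le:
  assumes "finite S" "card S = m + 2 * g"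
  shows "card (involutions S m) * (fact m * 2 ^ g * fact g) \<le> fact (card S)"
  using assms
proof (induction "card S" arbitrary: S m g rule: less_induct)
  case less
  show ?case
  proof (cases "S = {}")
    case True
    then have "involutions S m \<subseteq> {id}" by (auto simp: involutions_def)
    then have "card (involutions S m) \<le> 1" using card_mono[of "{id}" "involutions S m"] by simp
    then show ?thesis using True less.prems by simp
  next
    case False
    then obtain a where a: "a \<in> S" by blast
    define s where "s = card S"
    have s: "s \<ge> 1" "s = m + 2 * g" using a less.prems by (auto simp: s_def card_gt_0_iff Suc_le_eq)
    define F :: nat where "F = fact m * 2 ^ g * fact g"
    have fixed: "(if m = 0 then 0 else card (involutions (S - {a}) (m - 1))) * F \<le> m * fact (s - 1)"
    proof (cases m)
      case (Suc m')
      have "card (involutions (S - {a}) m') * (fact m' * 2 ^ g * fact g) \<le> fact (card (S - {a}))"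
        using a less.prems Suc s(1) by (intro less.hyps) (auto simp: s_def)
      then have "m * (card (involutions (S - {a}) m') * (fact m' * 2 ^ g * fact g)) \<le> m * fact (card (S - {a}))"
        by (rule mult_le_mono2)
      then show ?thesis using a Suc by (simp add: F_def s_def algebra_simps)
    qed simp
    have paired: "card (involutions (S - {a, b}) m) * F \<le> 2 * g * fact (s - 2)" if b: "b \<in> S - {a}" for b
    proof -
      have "card {a, b} = 2" using a b by auto
      then have card_ab: "card (S - {a, b}) = s - 2" using a b by (simp add: s_def card_Diff_subset)
      show ?thesis
      proof (cases g)
        case 0
        then show ?thesis using involutions_empty_if_card_less[of "S - {a, b}" m] s card_ab less.prems(1)
          by simp
      next
        case (Suc h)
        have "card (involutions (S - {a, b}) m) * (fact m * 2 ^ h * fact h) \<le> fact (card (S - {a, b}))"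
          using less.prems(1) a b Suc s card_ab by (intro less.hyps) (auto simp: s_def)
        then have "2 * g * (card (involutions (S - {a, b}) m) * (fact m * 2 ^ h * fact h))
            \<le> 2 * g * fact (card (S - {a, b}))"
          by (rule mult_le_mono2)
        then show ?thesis using card_ab by (simp add: F_def Suc algebra_simps)
      qed
    qed
    have "card (involutions S m) * F \<le> (if m = 0 then 0 else card (involutions (S - {a}) (m - 1))) * F
        + (\<Sum>b\<in>S - {a}. card (involutions (S - {a, b}) m) * F)"
      using card_involutions_recurrence[OF less.prems(1) a, of m]
      by (metis add_mult_distrib mult_le_mono1 sum_distrib_right)
    also have "\<dots> \<le> m * fact (s - 1) + (\<Sum>b\<in>S - {a}. 2 * g * fact (s - 2))"
      using fixed paired by (intro add_mono sum_mono) auto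
    also have "\<dots> \<le> fact s" using fact_ge_split[OF s(2,1)] a less.prems(1) by (simp add: s_def)
    finally show ?thesis by (simp add: F_def s_def)
  qed
qed

section \<open>The factorial estimate\<close>

lemma Suc_power_ge_double:
  fixes g :: nat
  assumes "g \<ge> 1"
  shows "2 * g ^ g \<le> (g + 1) ^ g"
proof -
  have "(0::real) \<le> 1 / real g" by simp
  then have "1 + real g * (1 / real g) \<le> (1 + 1 / real g) ^ g"
    by (intro Bernoulli_inequality) linarith
  then have "real g ^ g * 2 \<le> real g ^ g * (1 + 1 / real g) ^ g"
    using assms by simp
  also have "\<dots> = (real g + 1) ^ g"
    using assms by (simp add: power_mult_distrib[symmetric] field_simps)
  finally have "real (2 * g ^ g) \<le> real ((g + 1) ^ g)" by (simp add: ac_simps)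
  then show ?thesis by (simp only: of_nat_le_iff)
qed

lemma Suc_power_ge_eight:
  fixes g :: nat
  assumes "g \<ge> 1"
  shows "8 * g ^ (3 * g) \<le> (g + 1) ^ (3 * g)"
proof -
  have "8 * g ^ (3 * g) = (2 * g ^ g) ^ 3" by (simp add: power_mult_distrib power_mult[symmetric] mult.commute)
  also have "\<dots> \<le> ((g + 1) ^ g) ^ 3" using Suc_power_ge_double[OF assms] by (rule power_mono) simp
  also have "\<dots> = (g + 1) ^ (3 * g)" by (simp add: power_mult[symmetric] mult.commute)
  finally show ?thesis .
qed

lemma cusp_step_polynomial:
  fixes n k :: nat
  assumes "n \<ge> 1" "k \<ge> 1"
  shows "2 * (n * ((2 * k + 3) * (2 * k + 2))) \<le> (n + 1) ^ 2 * (3 * k + 3 * n + 6) * k"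
proof -
  obtain a b where "n = Suc a" "k = Suc b" using assms not0_implies_Suc by (metis not_one_le_zero)
  then show ?thesis by (simp add: ring_distribs power2_eq_square)
qed

lemma genus_step_polynomial:
  fixes h :: nat
  shows "(4 * h + 7) * (4 * h + 6) * (4 * h + 5) * (4 * h + 4) * (3 * h + 3)
    \<le> 8 * ((h + 2) ^ 3 * (3 * h + 6) * ((2 * h + 2) * (2 * h + 1)) * (2 * (h + 2)))"
  by (simp add: ring_distribs power_numeral_reduce)

definition surface_graph_bound :: "nat \<Rightarrow> nat \<Rightarrow> nat" where
  "surface_graph_bound g n = n * g ^ (3 * g) * (3 * g + 3 * n - 3) ^ n"

definition factorial_estimate :: "nat \<Rightarrow> nat \<Rightarrow> nat \<Rightarrow> bool" where
  "factorial_estimate g n k \<longleftrightarrow>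
     fact (2 * k + 1) \<le> surface_graph_bound g n * fact (k - 1) * fact n * 2 ^ g * fact g"

lemma factorial_estimate_Suc_cusps:
  assumes est: "factorial_estimate g n k" and k: "k + 2 = n + 2 * g" "k \<ge> 1" and n: "n \<ge> 1"
  shows "factorial_estimate g (n + 1) (k + 1)"
proof -
  define c where "c = 3 * g + 3 * n - 3"
  define K :: nat where "K = fact (k - 1) * fact n * 2 ^ g * fact g"
  have poly: "n * ((2 * k + 3) * (2 * k + 2)) \<le> (n + 1) ^ 2 * (c + 3) * k"
  proof -
    have "2 * (n * ((2 * k + 3) * (2 * k + 2))) \<le> (n + 1) ^ 2 * (3 * k + 3 * n + 6) * k"
      using cusp_step_polynomial[OF n k(2)] .
    moreover have "3 * k + 3 * n + 6 = 2 * (c + 3)" using k n by (simp add: c_def)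
    then have "(n + 1) ^ 2 * (3 * k + 3 * n + 6) * k = 2 * ((n + 1) ^ 2 * (c + 3) * k)"
      by (simp only: ac_simps)
    ultimately show ?thesis by linarith
  qed
  have "g ^ (3 * g) * c ^ n * K \<le> g ^ (3 * g) * (c + 3) ^ n * K"
    using power_mono[of c "c + 3" n] by simp
  note growth = mult_mono[OF poly this]
  have "fact (2 * (k + 1) + 1) = (2 * k + 3) * (2 * k + 2) * (fact (2 * k + 1) :: nat)"
    by (simp add: fact_Suc numeral_eq_Suc algebra_simps)
  also have "\<dots> \<le> (2 * k + 3) * (2 * k + 2) * (n * g ^ (3 * g) * c ^ n * K)"
    using est by (simp add: factorial_estimate_def surface_graph_bound_def c_def K_def mult.assoc)
  also have "\<dots> = n * ((2 * k + 3) * (2 * k + 2)) * (g ^ (3 * g) * c ^ n * K)"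
    by (simp only: ac_simps)
  also have "\<dots> \<le> (n + 1) ^ 2 * (c + 3) * k * (g ^ (3 * g) * (c + 3) ^ n * K)"
    using growth by simp
  also have "\<dots> = surface_graph_bound g (n + 1) * fact (k + 1 - 1) * fact (n + 1) * 2 ^ g * fact g"
  proof -
    have "surface_graph_bound g (n + 1) = (n + 1) * g ^ (3 * g) * (c + 3) ^ (n + 1)"
      using n by (simp add: surface_graph_bound_def c_def)
    moreover have "fact (k + 1 - 1) = k * (fact (k - 1) :: nat)"
      using k(2) fact_reduce[of k, where 'a = nat] by simp
    moreover have "fact (n + 1) = (n + 1) * (fact n :: nat)" by simp
    ultimately show ?thesis
      by (simp only: K_def power_add power_one_right power2_eq_square) (simp only: ac_simps)
  qed
  finally show ?thesis unfolding factorial_estimate_def .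
qed

lemma factorial_estimate_Suc_genus:
  assumes est: "factorial_estimate (h + 1) 1 (2 * h + 1)"
  shows "factorial_estimate (h + 2) 1 (2 * h + 3)"
proof -
  define K :: nat where "K = fact (2 * h) * 2 ^ (h + 1) * fact (h + 1)"
  define X :: nat where "X = (h + 1) ^ (3 * (h + 1))"
  define Q :: nat where "Q = (4 * h + 7) * (4 * h + 6) * (4 * h + 5) * (4 * h + 4)"
  define P :: nat where "P = (h + 2) ^ 3 * (3 * h + 6) * ((2 * h + 2) * (2 * h + 1)) * (2 * (h + 2))"
  have poly: "Q * (3 * h + 3) \<le> 8 * P"
    unfolding Q_def P_def by (rule genus_step_polynomial)
  have est': "fact (4 * h + 3) \<le> X * (3 * h + 3) * K"
  proof -
    have "2 * (2 * h + 1) + 1 = 4 * h + 3" "2 * h + 1 - 1 = 2 * h" "3 * (h + 1) + 3 * 1 - 3 = 3 * h + 3"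
      by simp_all
    with est show ?thesis
      unfolding factorial_estimate_def surface_graph_bound_def X_def K_def
      by (simp only: fact_1 mult_1 mult_1_right power_one_right mult.assoc)
  qed
  have "fact (2 * (2 * h + 3) + 1) = Q * (fact (4 * h + 3) :: nat)"
  proof -
    have "2 * (2 * h + 3) + 1 = Suc (Suc (Suc (Suc (4 * h + 3))))" by simp
    then have "fact (2 * (2 * h + 3) + 1) =
        Suc (Suc (Suc (Suc (4 * h + 3)))) * (Suc (Suc (Suc (4 * h + 3))) *
          (Suc (Suc (4 * h + 3)) * (Suc (4 * h + 3) * (fact (4 * h + 3) :: nat))))"
      by (simp only: fact_Suc of_nat_id)
    then show ?thesis by (simp add: Q_def algebra_simps)
  qed
  also have "\<dots> \<le> Q * (X * (3 * h + 3) * K)" using est' by simp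
  also have "\<dots> = (Q * (3 * h + 3)) * X * K" by (simp only: ac_simps)
  also have "\<dots> \<le> P * (8 * X) * K" using poly by (simp add: mult_right_mono)
  also have "\<dots> \<le> P * (h + 2) ^ (3 * (h + 1)) * K"
  proof -
    have "8 * X \<le> (h + 2) ^ (3 * (h + 1))"
      using Suc_power_ge_eight[of "h + 1", OF le_add2] by (simp only: X_def add.assoc one_add_one)
    then show ?thesis by (rule mult_right_mono[OF mult_left_mono]) simp_all
  qed
  also have "\<dots> = surface_graph_bound (h + 2) 1 * fact (2 * h + 3 - 1) * fact 1 * 2 ^ (h + 2) * fact (h + 2)"
  proof -
    have "3 * (h + 2) = 3 * (h + 1) + 3" "3 * (h + 2) + 3 * 1 - 3 = 3 * h + 6" by simp_all
    then have "surface_graph_bound (h + 2) 1 = (h + 2) ^ (3 * (h + 1)) * (h + 2) ^ 3 * (3 * h + 6)"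
      unfolding surface_graph_bound_def by (simp only: power_add power_one_right mult_1)
    moreover have "fact (2 * h + 3 - 1) = (2 * h + 2) * (2 * h + 1) * (fact (2 * h) :: nat)"
    proof -
      have "2 * h + 3 - 1 = Suc (Suc (2 * h))" by simp
      then show ?thesis by (simp only: fact_Suc of_nat_id) (simp add: algebra_simps)
    qed
    moreover have "fact (h + 2) = (h + 2) * (fact (h + 1) :: nat)"
      using fact_Suc[of "h + 1", where 'a = nat] by simp
    moreover have "(2::nat) ^ (h + 2) = 2 * 2 ^ (h + 1)" by simp
    ultimately show ?thesis by (simp only: P_def K_def fact_1 mult_1_right) (simp only: ac_simps)
  qed
  finally show ?thesis unfolding factorial_estimate_def .
qed

lemma factorial_estimate_one_cusp: "factorial_estimate (h + 1) 1 (2 * h + 1)"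
proof (induction h)
  case 0
  then show ?case by (simp add: factorial_estimate_def surface_graph_bound_def fact_numeral)
next
  case (Suc h)
  have "Suc h + 1 = h + 2" "2 * Suc h + 1 = 2 * h + 3" by simp_all
  with factorial_estimate_Suc_genus[OF Suc.IH] show ?case by (simp only:)
qed

lemma factorial_estimate_holds:
  assumes "n \<ge> 1" "k \<ge> 1" "k + 2 = n + 2 * g"
  shows "factorial_estimate g n k"
  using assms
proof (induction n arbitrary: k)
  case (Suc n)
  show ?case
  proof (cases "n = 0")
    case True
    then obtain h where "g = h + 1" "k = 2 * h + 1" using Suc.prems by (cases g) auto
    then show ?thesis using True factorial_estimate_one_cusp by simp
  next
    case False
    show ?thesis
    proof (cases "k = 1")
      case True
      then have "g = 0" "n = 2" using Suc.prems False by arith+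
      then show ?thesis using True by (simp add: factorial_estimate_def surface_graph_bound_def fact_numeral)
    next
      case False
      then have "factorial_estimate g n (k - 1)" using Suc.prems \<open>n \<noteq> 0\<close> by (intro Suc.IH) auto
      then show ?thesis
        using factorial_estimate_Suc_cusps[of g n "k - 1"] Suc.prems \<open>n \<noteq> 0\<close> False by simp
    qed
  qed
qed simp

section \<open>Isomorphisms of graphs with free edges\<close>

lemma hgraph_iso_trans:
  assumes "hgraph_iso G1 G2" and "hgraph_iso G2 G3"
  shows "hgraph_iso G1 G3"
proof -
  obtain V1 H1 n1 p1 V2 H2 n2 p2 V3 H3 n3 p3
    where G: "G1 = (V1, H1, n1, p1)" "G2 = (V2, H2, n2, p2)" "G3 = (V3, H3, n3, p3)"
    by (metis prod_cases4)
  obtain f h f' h' where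
    fh: "bij_betw f V1 V2" "bij_betw h H1 H2" "\<forall>x\<in>H1. n2 (h x) = f (n1 x) \<and> p2 (h x) = h (p1 x)" and
    fh': "bij_betw f' V2 V3" "bij_betw h' H2 H3" "\<forall>x\<in>H2. n3 (h' x) = f' (n2 x) \<and> p3 (h' x) = h' (p2 x)"
    using assms unfolding G hgraph_iso_def by auto
  have "bij_betw (f' \<circ> f) V1 V3" "bij_betw (h' \<circ> h) H1 H3"
    using fh fh' by (auto intro: bij_betw_trans)
  moreover have "\<forall>x\<in>H1. n3 ((h' \<circ> h) x) = (f' \<circ> f) (n1 x) \<and> p3 ((h' \<circ> h) x) = (h' \<circ> h) (p1 x)"
    using fh fh' bij_betwE[OF fh(2)] by auto
  ultimately show ?thesis unfolding G hgraph_iso_def by blast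
qed

lemma hgraph_iso_sym:
  assumes "wf_hgraph G1" and "hgraph_iso G1 G2"
  shows "hgraph_iso G2 G1"
proof -
  obtain V1 H1 n1 p1 V2 H2 n2 p2 where G: "G1 = (V1, H1, n1, p1)" "G2 = (V2, H2, n2, p2)"
    by (metis prod_cases4)
  obtain f h where fh: "bij_betw f V1 V2" "bij_betw h H1 H2"
    "\<forall>x\<in>H1. n2 (h x) = f (n1 x) \<and> p2 (h x) = h (p1 x)"
    using assms(2) unfolding G hgraph_iso_def by auto
  have wf: "\<forall>x\<in>H1. n1 x \<in> V1 \<and> p1 x \<in> H1" using assms(1) unfolding G wf_hgraph_def by auto
  have "n1 (inv_into H1 h y) = inv_into V1 f (n2 y) \<and> p1 (inv_into H1 h y) = inv_into H1 h (p2 y)"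
    if "y \<in> H2" for y
  proof -
    define x where "x = inv_into H1 h y"
    have x: "x \<in> H1" "h x = y"
      using that fh(2) by (auto simp: x_def bij_betw_def inv_into_into f_inv_into_f)
    then show ?thesis
      using fh wf by (auto simp: x_def[symmetric] bij_betw_def inv_into_f_f)
  qed
  then show ?thesis
    unfolding G hgraph_iso_def using fh by (blast intro: bij_betw_inv_into)
qed

lemma rtrancl_map_rel:
  assumes "\<And>a b. (a, b) \<in> R \<Longrightarrow> (f a, f b) \<in> S" and "(u, v) \<in> R\<^sup>*"
  shows "(f u, f v) \<in> S\<^sup>*"
  using assms(2) by induction (auto intro: rtrancl_into_rtrancl assms(1))

lemma connected_hgraph_iso:
  assumes "wf_hgraph G1" "connected_hgraph G1" "hgraph_iso G1 G2"
  shows "connected_hgraph G2"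
proof -
  obtain V1 H1 n1 p1 V2 H2 n2 p2 where G: "G1 = (V1, H1, n1, p1)" "G2 = (V2, H2, n2, p2)"
    by (metis prod_cases4)
  obtain f h where fh: "bij_betw f V1 V2" "bij_betw h H1 H2"
    "\<forall>x\<in>H1. n2 (h x) = f (n1 x) \<and> p2 (h x) = h (p1 x)"
    using assms(3) unfolding G hgraph_iso_def by auto
  have wf: "\<forall>x\<in>H1. p1 x \<in> H1" using assms(1) unfolding G wf_hgraph_def by auto
  have adj: "(f a, f b) \<in> adjacent G2" if ab: "(a, b) \<in> adjacent G1" for a b
  proof -
    obtain x where x: "x \<in> H1" "a = n1 x" "b = n1 (p1 x)" using ab unfolding G adjacent_def by auto
    then have "h x \<in> H2" "f a = n2 (h x)" "f b = n2 (p2 (h x))"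
      using fh wf bij_betwE by fastforce+
    then show ?thesis unfolding G adjacent_def by auto
  qed
  have "V2 = f ` V1" using fh(1) by (simp add: bij_betw_def)
  then show ?thesis
    using assms(2) rtrancl_map_rel[where R = "adjacent G1" and S = "adjacent G2" and f = f, OF adj]
    unfolding G connected_hgraph_def by auto
qed

lemma conjugate_involution:
  assumes h: "bij_betw h H H'" and pair: "\<forall>x\<in>H. pair x \<in> H \<and> pair (pair x) = x"
  defines "q \<equiv> \<lambda>z. if z \<in> H' then h (pair (inv_into H h z)) else z"
  shows "q \<in> involutions H' (card {x\<in>H. pair x = x})" and "\<forall>x\<in>H. q (h x) = h (pair x)"
proof -
  have inv: "inv_into H h z \<in> H" "h (inv_into H h z) = z" if "z \<in> H'" for z
    using that h by (auto simp: bij_betw_def inv_into_into f_inv_into_f)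
  have hinv: "inv_into H h (h x) = x" if "x \<in> H" for x
    using that h by (simp add: bij_betw_def inv_into_f_f)
  have hH: "h x \<in> H'" if "x \<in> H" for x using that bij_betwE[OF h] by blast
  show q_h: "\<forall>x\<in>H. q (h x) = h (pair x)" by (simp add: q_def hH hinv)
  have "{z\<in>H'. q z = z} = h ` {x\<in>H. pair x = x}"
  proof (intro equalityI subsetI)
    fix z assume "z \<in> {z\<in>H'. q z = z}"
    then have "z \<in> H'" "h (pair (inv_into H h z)) = h (inv_into H h z)"
      by (auto simp: q_def inv)
    then show "z \<in> h ` {x\<in>H. pair x = x}"
      using inv pair h by (auto simp: bij_betw_def inj_on_eq_iff intro!: image_eqI[of z h "inv_into H h z"])
  qed (auto simp: q_h hH)
  moreover have "card (h ` {x\<in>H. pair x = x}) = card {x\<in>H. pair x = x}"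
    by (rule card_image[OF inj_on_subset[OF bij_betw_imp_inj_on[OF h]]]) blast
  moreover have "q z \<in> H' \<and> q (q z) = z" if z: "z \<in> H'" for z
  proof -
    have "pair (inv_into H h z) \<in> H" using inv(1)[OF z] pair by blast
    then show ?thesis using z inv[OF z] pair hH hinv by (simp add: q_def)
  qed
  moreover have "q z = z" if "z \<notin> H'" for z using that by (simp add: q_def)
  ultimately show "q \<in> involutions H' (card {x\<in>H. pair x = x})"
    unfolding involutions_def by simp
qed

lemma card_eq_mult_card_fibres:
  assumes "finite V" "finite H" "\<forall>x\<in>H. node x \<in> V" "\<forall>v\<in>V. card {x\<in>H. node x = v} = d"
  shows "card H = d * card V"
proof -
  have "card (\<Union>v\<in>V. {x\<in>H. node x = v}) = (\<Sum>v\<in>V. card {x\<in>H. node x = v})"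
    using assms(1,2) by (intro card_UN_disjoint) auto
  moreover have "(\<Union>v\<in>V. {x\<in>H. node x = v}) = H" using assms(3) by auto
  ultimately show ?thesis using assms(4) by simp
qed

lemma half_edge_numbering:
  assumes "finite V" "finite H" "\<forall>x\<in>H. node x \<in> V" "\<forall>v\<in>V. card {x\<in>H. node x = v} = 3"
  obtains f h where "bij_betw f V {0..<card V}" "bij_betw h H {0..<3 * card V}"
    "\<forall>x\<in>H. h x div 3 = f (node x)"
proof -
  from ex_bij_betw_finite_nat[OF assms(1)] obtain f where f: "bij_betw f V {0..<card V}" ..
  have "\<forall>v\<in>V. \<exists>e. bij_betw e {x\<in>H. node x = v} {0..<3::nat}"
  proof
    fix v assume "v \<in> V"
    from ex_bij_betw_finite_nat[of "{x\<in>H. node x = v}"] assms(2,4) \<open>v \<in> V\<close>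
    show "\<exists>e. bij_betw e {x\<in>H. node x = v} {0..<3::nat}" by simp
  qed
  then obtain E where E: "\<forall>v\<in>V. bij_betw (E v) {x\<in>H. node x = v} {0..<3::nat}"
    by (rule bchoice[elim_format]) blast
  define h where "h x = 3 * f (node x) + E (node x) x" for x
  have E_lt: "E (node x) x < 3" if "x \<in> H" for x using E assms(3) that bij_betwE by fastforce
  then have h_div: "h x div 3 = f (node x)" and h_mod: "h x mod 3 = E (node x) x" if "x \<in> H" for x
    using that by (simp_all add: h_def)
  have "inj_on h H"
  proof (rule inj_onI)
    fix x y assume xy: "x \<in> H" "y \<in> H" "h x = h y"
    then have "node x = node y"
      using h_div f assms(3) by (metis bij_betw_def inj_on_eq_iff)
    moreover have "E (node x) x = E (node x) y" using h_mod xy \<open>node x = node y\<close> by metis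
    ultimately show "x = y" using E xy assms(3) by (auto simp: bij_betw_def inj_on_def)
  qed
  moreover have "h ` H \<subseteq> {0..<3 * card V}"
  proof
    fix z assume "z \<in> h ` H"
    then obtain x where "x \<in> H" "z = h x" by blast
    moreover have "f (node x) < card V" using f assms(3) \<open>x \<in> H\<close> bij_betwE by fastforce
    ultimately show "z \<in> {0..<3 * card V}" using E_lt[OF \<open>x \<in> H\<close>] by (simp add: h_def)
  qed
  moreover have "card H = 3 * card V" by (rule card_eq_mult_card_fibres[OF assms])
  ultimately have "bij_betw h H {0..<3 * card V}"
    using assms(2) by (simp add: bij_betw_def card_image card_subset_eq)
  then show ?thesis using that f h_div by blast
qed

definition standard_hgraph :: "nat \<Rightarrow> (nat \<Rightarrow> nat) \<Rightarrow> hgraph" where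
  "standard_hgraph k p = ({0..<k}, {0..<3 * k}, \<lambda>x. x div 3, p)"

lemma pseudo_3_regular_iso_standard:
  assumes "pseudo_3_regular G"
  obtains p where "p \<in> involutions {0..<3 * card (nodes G)} (card (free_edges G))"
    "hgraph_iso G (standard_hgraph (card (nodes G)) p)"
proof -
  obtain V H node pair where G: "G = (V, H, node, pair)" by (metis prod_cases4)
  have wf: "finite V" "finite H" "\<forall>x\<in>H. node x \<in> V" "\<forall>x\<in>H. pair x \<in> H \<and> pair (pair x) = x"
    and deg: "\<forall>v\<in>V. card {x\<in>H. node x = v} = 3"
    using assms unfolding G pseudo_3_regular_def wf_hgraph_def by auto
  obtain f h where f: "bij_betw f V {0..<card V}" and h: "bij_betw h H {0..<3 * card V}"
    and h_div: "\<forall>x\<in>H. h x div 3 = f (node x)"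
    using half_edge_numbering[OF wf(1-3) deg] by blast
  obtain q where q: "q \<in> involutions {0..<3 * card V} (card {x\<in>H. pair x = x})"
    "\<forall>x\<in>H. q (h x) = h (pair x)"
    using conjugate_involution[OF h wf(4)] by blast
  have "hgraph_iso G (standard_hgraph (card V) q)"
    unfolding G standard_hgraph_def hgraph_iso_def prod.case using f h h_div q(2) by blast
  then show ?thesis using q(1) that by (simp add: G nodes_def free_edges_def)
qed

section \<open>Breadth-first normal form\<close>

definition swap_blocks :: "nat \<Rightarrow> nat \<Rightarrow> nat \<Rightarrow> nat" where
  "swap_blocks i w x = 3 * Transposition.transpose i w (x div 3) + x mod 3"

lemma swap_blocks_div [simp]: "swap_blocks i w x div 3 = Transposition.transpose i w (x div 3)"
  by (simp add: swap_blocks_def)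

lemma swap_blocks_mod [simp]: "swap_blocks i w x mod 3 = x mod 3"
  by (simp add: swap_blocks_def)

lemma swap_blocks_involutory [simp]: "swap_blocks i w (swap_blocks i w x) = x"
  by (subst swap_blocks_def) simp

lemma swap_blocks_other: "x div 3 \<noteq> i \<Longrightarrow> x div 3 \<noteq> w \<Longrightarrow> swap_blocks i w x = x"
  by (simp add: swap_blocks_def)

lemma bij_betw_swap_blocks:
  assumes "i < k" "w < k"
  shows "bij_betw (swap_blocks i w) {0..<3 * k} {0..<3 * k}"
proof -
  have "swap_blocks i w x < 3 * k" if "x < 3 * k" for x
  proof -
    have "Transposition.transpose i w (x div 3) < k" using that assms by (auto simp: transpose_def)
    then show ?thesis by (simp add: swap_blocks_def)
  qed
  then show ?thesis by (intro bij_betw_byWitness[where f' = "swap_blocks i w"]) auto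
qed

lemma transpose_same_block_div:
  "a div 3 = b div 3 \<Longrightarrow> Transposition.transpose a b x div 3 = x div 3"
  by (simp add: transpose_def)

lemma standard_hgraph_relabel:
  assumes \<sigma>: "bij_betw \<sigma> {0..<3 * k} {0..<3 * k}" and \<tau>: "bij_betw \<tau> {0..<k} {0..<k}"
    and blocks: "\<forall>x<3 * k. \<sigma> x div 3 = \<tau> (x div 3)" and p: "p \<in> involutions {0..<3 * k} n"
  obtains p' where "p' \<in> involutions {0..<3 * k} n" "\<forall>x<3 * k. p' (\<sigma> x) = \<sigma> (p x)"
    "hgraph_iso (standard_hgraph k p) (standard_hgraph k p')"
proof -
  have "\<forall>x\<in>{0..<3 * k}. p x \<in> {0..<3 * k} \<and> p (p x) = x" and n: "card {x\<in>{0..<3 * k}. p x = x} = n"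
    using p by (auto simp: involutions_def)
  from conjugate_involution[OF \<sigma> this(1)] obtain p' where
    p': "p' \<in> involutions {0..<3 * k} n" "\<forall>x\<in>{0..<3 * k}. p' (\<sigma> x) = \<sigma> (p x)"
    unfolding n by blast
  have "hgraph_iso (standard_hgraph k p) (standard_hgraph k p')"
    unfolding standard_hgraph_def hgraph_iso_def prod.case using \<sigma> \<tau> blocks p'(2)
    by (intro exI[of _ \<tau>] exI[of _ \<sigma>]) auto
  then show ?thesis using that p' by auto
qed

lemma connected_standard_hgraph_exit:
  assumes "connected_hgraph (standard_hgraph k p)" "1 \<le> i" "i < k"
  shows "\<exists>x<3 * i. 3 * i \<le> p x"
proof (rule ccontr)
  assume "\<not> ?thesis"
  then have closed: "p x < 3 * i" if "x < 3 * i" for x using that by auto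
  have "v < i" if "(0, v) \<in> (adjacent (standard_hgraph k p))\<^sup>*" for v
    using that
  proof induction
    case (step y z)
    then obtain x where "y = x div 3" "z = p x div 3"
      by (auto simp: adjacent_def standard_hgraph_def)
    then show ?case using step.IH closed[of x] by linarith
  qed (use assms in simp)
  moreover have "(0, i) \<in> (adjacent (standard_hgraph k p))\<^sup>*"
    using assms unfolding connected_hgraph_def standard_hgraph_def by auto
  ultimately show False by blast
qed

definition bfs_ordered :: "(nat \<Rightarrow> nat) \<Rightarrow> nat \<Rightarrow> bool" where
  "bfs_ordered p i \<longleftrightarrow>
     (\<forall>j. 1 \<le> j \<longrightarrow> j < i \<longrightarrow> p (3 * j) < 3 * j \<and> (\<forall>x<3 * j. 3 * j \<le> p x \<longrightarrow> p (3 * j) \<le> x))"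

lemma block_relabelling:
  fixes i y k :: nat
  assumes "i \<le> y div 3" "y < 3 * k"
  obtains \<sigma> \<tau> where "bij_betw \<sigma> {0..<3 * k} {0..<3 * k}" "bij_betw \<tau> {0..<k} {0..<k}"
    "\<forall>x<3 * k. \<sigma> x div 3 = \<tau> (x div 3)" "\<forall>x<3 * i. \<sigma> x = x" "\<sigma> y = 3 * i"
proof -
  define w where "w = y div 3"
  have w: "i \<le> w" "w < k" using assms by (auto simp: w_def)
  define y' where "y' = swap_blocks i w y"
  have y': "y' = 3 * i + y mod 3" by (simp add: y'_def swap_blocks_def w_def)
  define \<sigma> where "\<sigma> = Transposition.transpose (3 * i) y' \<circ> swap_blocks i w"
  have "bij_betw \<sigma> {0..<3 * k} {0..<3 * k}"
    unfolding \<sigma>_def using w y'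
    by (intro bij_betw_trans[OF bij_betw_swap_blocks] permutes_imp_bij[OF permutes_swap_id]) auto
  moreover have "bij_betw (Transposition.transpose i w) {0..<k} {0..<k}"
    using w by (intro permutes_imp_bij permutes_swap_id) auto
  moreover have "\<forall>x<3 * k. \<sigma> x div 3 = Transposition.transpose i w (x div 3)"
    using transpose_same_block_div[of "3 * i" y'] by (simp add: \<sigma>_def y')
  moreover have "\<forall>x<3 * i. \<sigma> x = x"
    using w y' by (simp add: \<sigma>_def swap_blocks_other transpose_def)
  moreover have "\<sigma> y = 3 * i" by (simp add: \<sigma>_def y'_def)
  ultimately show ?thesis using that by blast
qed

lemma bfs_ordered_extend:
  assumes p: "p \<in> involutions {0..<3 * k} n" and conn: "connected_hgraph (standard_hgraph k p)"
    and bfs: "bfs_ordered p i" and i: "1 \<le> i" "i < k"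
  obtains p' where "p' \<in> involutions {0..<3 * k} n" "hgraph_iso (standard_hgraph k p) (standard_hgraph k p')"
    "bfs_ordered p' (Suc i)"
proof -
  define x0 where "x0 = (LEAST x. x < 3 * i \<and> 3 * i \<le> p x)"
  have x0: "x0 < 3 * i" "3 * i \<le> p x0"
    using LeastI_ex[OF connected_standard_hgraph_exit[OF conn i]] by (simp_all add: x0_def)
  have x0_least: "x0 \<le> x" if "x < 3 * i" "3 * i \<le> p x" for x
    unfolding x0_def using that by (simp add: Least_le)
  define y where "y = p x0"
  have y: "y < 3 * k" "p y = x0" "i \<le> y div 3" using p x0 i by (auto simp: y_def involutions_def)
  obtain \<sigma> \<tau> where \<sigma>: "bij_betw \<sigma> {0..<3 * k} {0..<3 * k}" "bij_betw \<tau> {0..<k} {0..<k}"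
    "\<forall>x<3 * k. \<sigma> x div 3 = \<tau> (x div 3)" and \<sigma>_low: "\<forall>x<3 * i. \<sigma> x = x" and \<sigma>_y: "\<sigma> y = 3 * i"
    using block_relabelling[OF y(3) y(1)] by blast
  obtain p' where p': "p' \<in> involutions {0..<3 * k} n" "\<forall>x<3 * k. p' (\<sigma> x) = \<sigma> (p x)"
    "hgraph_iso (standard_hgraph k p) (standard_hgraph k p')"
    using standard_hgraph_relabel[OF \<sigma>(1-3) p] by blast
  have p'_low: "p' x = \<sigma> (p x)" if "x < 3 * i" for x
  proof -
    have "x < 3 * k" using that i by simp
    then show ?thesis using p'(2) \<sigma>_low that by metis
  qed
  have exits: "3 * j \<le> p x" if "x < 3 * i" "j \<le> i" "3 * j \<le> p' x" for x j
    using that p'_low \<sigma>_low by (cases "p x < 3 * i") auto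
  have "p' (3 * i) = x0"
    using p'(2) \<sigma>_y y(1,2) \<sigma>_low x0(1) by metis
  then have "bfs_ordered p' (Suc i)"
    using bfs x0 x0_least exits p'_low \<sigma>_low
    unfolding bfs_ordered_def by (auto simp: less_Suc_eq)
  with p' that show ?thesis by blast
qed

lemma bfs_ordered_exists:
  assumes G: "wf_hgraph G" "connected_hgraph G"
    and p: "p \<in> involutions {0..<3 * k} n" "hgraph_iso G (standard_hgraph k p)"
  obtains p' where "p' \<in> involutions {0..<3 * k} n" "hgraph_iso G (standard_hgraph k p')"
    "bfs_ordered p' k"
proof -
  have "\<exists>p'. p' \<in> involutions {0..<3 * k} n \<and> hgraph_iso G (standard_hgraph k p') \<and> bfs_ordered p' (Suc i)"
    if "Suc i \<le> k" for i
    using that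
  proof (induction i)
    case 0
    then show ?case using p by (auto simp: bfs_ordered_def)
  next
    case (Suc i)
    then obtain q where q: "q \<in> involutions {0..<3 * k} n" "hgraph_iso G (standard_hgraph k q)"
      "bfs_ordered q (Suc i)"
      by auto
    have "connected_hgraph (standard_hgraph k q)" using connected_hgraph_iso[OF G q(2)] .
    then obtain q' where "q' \<in> involutions {0..<3 * k} n"
      "hgraph_iso (standard_hgraph k q) (standard_hgraph k q')" "bfs_ordered q' (Suc (Suc i))"
      using bfs_ordered_extend[OF q(1) _ q(3)] Suc.prems by auto
    then show ?case using hgraph_iso_trans[OF q(2)] by blast
  qed
  moreover have "bfs_ordered p 0" by (simp add: bfs_ordered_def)
  ultimately show ?thesis using that p by (cases k) auto
qed

section \<open>Counting normal forms\<close>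

lemma strict_mono_on_image_eq:
  fixes f g :: "nat \<Rightarrow> 'a::linorder"
  assumes f: "strict_mono_on A f" and g: "strict_mono_on A g" and fg: "f ` A = g ` A"
  shows "i \<in> A \<Longrightarrow> f i = g i"
proof (induction i rule: less_induct)
  case (less i)
  have "f i \<in> g ` A" "g i \<in> f ` A" using fg less.prems by blast+
  then obtain j j' where j: "j \<in> A" "f i = g j" and j': "j' \<in> A" "g i = f j'" by blast
  have "i \<le> j"
  proof (rule ccontr)
    assume "\<not> i \<le> j"
    then have "f j = f i" using less.IH j by simp
    then show False using strict_mono_on_eq[OF f j(1) less.prems] \<open>\<not> i \<le> j\<close> by simp
  qed
  moreover have "i \<le> j'"
  proof (rule ccontr)
    assume "\<not> i \<le> j'"
    then have "g j' = g i" using less.IH j' by simp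
    then show False using strict_mono_on_eq[OF g j'(1) less.prems] \<open>\<not> i \<le> j'\<close> by simp
  qed
  ultimately have "g i \<le> f i" "f i \<le> g i"
    using strict_mono_on_less_eq[OF g less.prems j(1)] strict_mono_on_less_eq[OF f less.prems j'(1)] j j'
    by simp_all
  then show ?case by simp
qed

lemma involutions_restrict:
  assumes p: "p \<in> involutions T m" and "S \<subseteq> T" and closed: "\<forall>x\<in>S. p x \<in> S"
    and fixed: "\<forall>x\<in>T. p x = x \<longrightarrow> x \<in> S"
  shows "(\<lambda>x. if x \<in> S then p x else x) \<in> involutions S m"
proof -
  have "{x\<in>S. (if x \<in> S then p x else x) = x} = {x\<in>T. p x = x}"
    using \<open>S \<subseteq> T\<close> fixed by auto
  then show ?thesis using p \<open>S \<subseteq> T\<close> closed by (auto simp: involutions_def)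
qed

text \<open>In a breadth-first ordered pairing the half-edges \<open>3j\<close>, \<open>1 \<le> j < k\<close>, are paired backwards with
  increasing partners, so the pairing is encoded by the set of these partners among the remaining
  \<open>2k + 1\<close> half-edges together with the pairing it induces on the rest.\<close>

definition spare_half_edges :: "nat \<Rightarrow> nat set" where
  "spare_half_edges k = {0..<3 * k} - (\<lambda>j. 3 * j) ` {1..<k}"

lemma card_spare_half_edges: "k \<ge> 1 \<Longrightarrow> card (spare_half_edges k) = 2 * k + 1"
proof -
  assume "k \<ge> 1"
  have "card ((\<lambda>j. 3 * j) ` {1..<k}) = k - 1" by (simp add: card_image inj_on_def)
  moreover have "(\<lambda>j. 3 * j) ` {1..<k} \<subseteq> {0..<3 * k}" by auto
  ultimately show ?thesis using \<open>k \<ge> 1\<close> by (simp add: spare_half_edges_def card_Diff_subset)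
qed

locale bfs_pairing =
  fixes k n :: nat and p :: "nat \<Rightarrow> nat"
  assumes pairing: "p \<in> involutions {0..<3 * k} n" and bfs: "bfs_ordered p k"
begin

definition entries :: "nat set" where
  "entries = (\<lambda>j. p (3 * j)) ` {1..<k}"

definition residual :: "nat \<Rightarrow> nat" where
  "residual = (\<lambda>x. if x \<in> spare_half_edges k - entries then p x else x)"

lemma pairing_lt: "x < 3 * k \<Longrightarrow> p x < 3 * k" and pairing_involutory: "x < 3 * k \<Longrightarrow> p (p x) = x"
  and pairing_outside: "\<not> x < 3 * k \<Longrightarrow> p x = x"
  using pairing by (auto simp: involutions_def)

lemma entry_lt: "j \<in> {1..<k} \<Longrightarrow> p (3 * j) < 3 * j"
  and entry_least: "j \<in> {1..<k} \<Longrightarrow> x < 3 * j \<Longrightarrow> 3 * j \<le> p x \<Longrightarrow> p (3 * j) \<le> x"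
  using bfs by (auto simp: bfs_ordered_def)

lemma entry_partner: "j \<in> {1..<k} \<Longrightarrow> p (p (3 * j)) = 3 * j"
  by (simp add: pairing_involutory)

lemma strict_mono_entries: "strict_mono_on {1..<k} (\<lambda>j. p (3 * j))"
proof (rule strict_mono_onI)
  fix i j assume ij: "i \<in> {1..<k}" "j \<in> {1..<k}" "i < j"
  show "p (3 * i) < p (3 * j)"
  proof (cases "p (3 * j) < 3 * i")
    case True
    then have "p (3 * i) \<le> p (3 * j)"
      using entry_least[OF ij(1)] entry_partner[OF ij(2)] ij(3) by simp
    moreover have "p (3 * i) \<noteq> p (3 * j)"
    proof
      assume "p (3 * i) = p (3 * j)"
      then have "3 * i = 3 * j" using entry_partner[OF ij(1)] entry_partner[OF ij(2)] by metis
      then show False using ij(3) by simp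
    qed
    ultimately show ?thesis by simp
  qed (use entry_lt[OF ij(1)] in simp)
qed

lemma entry_not_first:
  assumes j: "j \<in> {1..<k}"
  shows "p (3 * j) \<notin> (\<lambda>j. 3 * j) ` {1..<k}"
proof
  assume "p (3 * j) \<in> (\<lambda>j. 3 * j) ` {1..<k}"
  then obtain j' where j': "j' \<in> {1..<k}" "p (3 * j) = 3 * j'" by blast
  then have "p (3 * j') = 3 * j" using entry_partner[OF j] by simp
  then show False using entry_lt[OF j] entry_lt[OF j'(1)] j'(2) by simp
qed

lemma entries_subset: "entries \<subseteq> spare_half_edges k"
  using entry_lt entry_not_first by (fastforce simp: entries_def spare_half_edges_def)

lemma card_entries: "card entries = k - 1"
  unfolding entries_def using strict_mono_on_eq[OF strict_mono_entries]
  by (subst card_image) (auto simp: inj_on_def)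

lemma residual_involution: "residual \<in> involutions (spare_half_edges k - entries) n"
  unfolding residual_def
proof (rule involutions_restrict[OF pairing])
  show "spare_half_edges k - entries \<subseteq> {0..<3 * k}" by (auto simp: spare_half_edges_def)
  show "\<forall>x\<in>spare_half_edges k - entries. p x \<in> spare_half_edges k - entries"
  proof
    fix x assume "x \<in> spare_half_edges k - entries"
    then have x: "x < 3 * k" "x \<notin> (\<lambda>j. 3 * j) ` {1..<k}" "x \<notin> entries"
      by (auto simp: spare_half_edges_def)
    have "p x \<notin> (\<lambda>j. 3 * j) ` {1..<k}"
      using x(1,3) pairing_involutory[OF x(1)] by (force simp: entries_def)
    moreover have "p x \<notin> entries"
      using x(1,2) pairing_involutory[OF x(1)] entry_partner by (force simp: entries_def)
    ultimately show "p x \<in> spare_half_edges k - entries"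
      using pairing_lt[OF x(1)] by (simp add: spare_half_edges_def)
  qed
  show "\<forall>x\<in>{0..<3 * k}. p x = x \<longrightarrow> x \<in> spare_half_edges k - entries"
    using entry_lt entry_partner by (fastforce simp: spare_half_edges_def entries_def)
qed

end

lemma bfs_pairing_eqI:
  assumes p: "bfs_pairing k n p" and q: "bfs_pairing k n q"
    and entries: "bfs_pairing.entries k p = bfs_pairing.entries k q"
    and residual: "bfs_pairing.residual k p = bfs_pairing.residual k q"
  shows "p = q"
proof
  interpret p: bfs_pairing k n p by (rule p)
  interpret q: bfs_pairing k n q by (rule q)
  have first: "p (3 * j) = q (3 * j)" if "j \<in> {1..<k}" for j
    using strict_mono_on_image_eq[OF p.strict_mono_entries q.strict_mono_entries _ that] entries
    by (simp add: p.entries_def q.entries_def)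
  fix x
  show "p x = q x"
  proof (cases "x < 3 * k")
    case True
    consider "x \<in> (\<lambda>j. 3 * j) ` {1..<k}" | "x \<in> p.entries" | "x \<in> spare_half_edges k - p.entries"
      using True by (auto simp: spare_half_edges_def)
    then show ?thesis
    proof cases
      case 1
      then show ?thesis using first by auto
    next
      case 2
      then obtain j where "j \<in> {1..<k}" "x = p (3 * j)" by (auto simp: p.entries_def)
      then show ?thesis using first p.entry_partner q.entry_partner by metis
    next
      case 3
      then show ?thesis using fun_cong[OF residual, of x] entries
        by (simp add: p.residual_def q.residual_def)
    qed
  qed (simp add: p.pairing_outside q.pairing_outside)
qed

lemma finite_bfs_pairings: "finite {p. bfs_pairing k n p}"
  by (rule finite_subset[OF _ finite_involutions[of "{0..<3 * k}" n]]) (auto simp: bfs_pairing_def)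

lemma card_bfs_pairings_le_sum:
  assumes "k \<ge> 1"
  shows "card {p. bfs_pairing k n p}
    \<le> (\<Sum>U\<in>{U. U \<subseteq> spare_half_edges k \<and> card U = k - 1}. card (involutions (spare_half_edges k - U) n))"
proof -
  define A where "A = spare_half_edges k"
  define Subsets where "Subsets = {U. U \<subseteq> A \<and> card U = k - 1}"
  define encode where "encode p = (bfs_pairing.entries k p, bfs_pairing.residual k p)" for p
  have "finite A" by (simp add: A_def spare_half_edges_def)
  then have finite_codes: "finite (Sigma Subsets (\<lambda>U. involutions (A - U) n))"
    by (auto simp: Subsets_def intro!: finite_SigmaI finite_involutions)
  have "inj_on encode {p. bfs_pairing k n p}"
    using bfs_pairing_eqI by (auto simp: inj_on_def encode_def)
  moreover have "encode ` {p. bfs_pairing k n p} \<subseteq> Sigma Subsets (\<lambda>U. involutions (A - U) n)"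
    using bfs_pairing.entries_subset bfs_pairing.card_entries bfs_pairing.residual_involution
    by (auto simp: encode_def Subsets_def A_def)
  ultimately have "card {p. bfs_pairing k n p} \<le> card (Sigma Subsets (\<lambda>U. involutions (A - U) n))"
    using card_inj_on_le[OF _ _ finite_codes] by blast
  also have "\<dots> = (\<Sum>U\<in>Subsets. card (involutions (A - U) n))"
    using \<open>finite A\<close> by (intro card_SigmaI) (auto simp: Subsets_def finite_involutions)
  finally show ?thesis by (simp add: A_def Subsets_def)
qed

lemma card_bfs_pairings_le:
  assumes k: "k \<ge> 1" "k + 2 = n + 2 * g"
  shows "card {p. bfs_pairing k n p} * (fact (k - 1) * (fact n * 2 ^ g * fact g)) \<le> fact (2 * k + 1)"
proof -
  define A where "A = spare_half_edges k"
  define Subsets where "Subsets = {U. U \<subseteq> A \<and> card U = k - 1}"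
  define F :: nat where "F = fact n * 2 ^ g * fact g"
  have A: "finite A" "card A = 2 * k + 1"
    using card_spare_half_edges[OF k(1)] by (simp_all add: A_def spare_half_edges_def)
  have "card {p. bfs_pairing k n p} * F \<le> (\<Sum>U\<in>Subsets. card (involutions (A - U) n)) * F"
    using card_bfs_pairings_le_sum[OF k(1), of n] by (simp add: A_def Subsets_def)
  also have "\<dots> \<le> (\<Sum>U\<in>Subsets. fact (k + 2))"
    unfolding sum_distrib_right
  proof (rule sum_mono)
    fix U assume "U \<in> Subsets"
    then have "U \<subseteq> A" "card U = k - 1" by (simp_all add: Subsets_def)
    then have "card (A - U) = n + 2 * g"
      using A k card_Diff_subset[OF finite_subset[OF \<open>U \<subseteq> A\<close> A(1)] \<open>U \<subseteq> A\<close>] by simp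
    then show "card (involutions (A - U) n) * F \<le> fact (k + 2)"
      using card_involutions_le[of "A - U" n g] A(1) k by (simp add: F_def)
  qed
  also have "\<dots> = ((2 * k + 1) choose (k - 1)) * fact (k + 2)"
    using n_subsets[OF A(1), of "k - 1"] A(2) by (simp add: Subsets_def)
  finally have count: "card {p. bfs_pairing k n p} * F \<le> ((2 * k + 1) choose (k - 1)) * fact (k + 2)" .
  have "2 * k + 1 - (k - 1) = k + 2" using k by simp
  then have binom: "fact (k - 1) * fact (k + 2) * ((2 * k + 1) choose (k - 1)) = fact (2 * k + 1)"
    using binomial_fact_lemma[of "k - 1" "2 * k + 1"] by (simp only:)
  have "card {p. bfs_pairing k n p} * (fact (k - 1) * F) = fact (k - 1) * (card {p. bfs_pairing k n p} * F)"
    by (simp only: ac_simps)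
  also have "\<dots> \<le> fact (k - 1) * (((2 * k + 1) choose (k - 1)) * fact (k + 2))"
    using count by (rule mult_left_mono) simp
  also have "\<dots> = fact (2 * k + 1)" using binom by (simp only: ac_simps)
  finally show ?thesis by (simp only: F_def)
qed

lemma surface_graph_card_nodes:
  assumes "surface_graph g n G"
  shows "card (nodes G) + 2 = n + 2 * g" and "card (nodes G) \<ge> 1"
proof -
  show "card (nodes G) + 2 = n + 2 * g" using assms by (simp add: surface_graph_def)
  obtain V H node pair where G: "G = (V, H, node, pair)" by (metis prod_cases4)
  have "finite V" "V \<noteq> {}"
    using assms unfolding surface_graph_def pseudo_3_regular_def G wf_hgraph_def connected_hgraph_def
    by auto
  then show "card (nodes G) \<ge> 1" by (simp add: G nodes_def Suc_le_eq card_gt_0_iff)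
qed

lemma surface_graph_iso_bfs_pairing:
  assumes "surface_graph g n G"
  obtains p where "bfs_pairing (card (nodes G)) n p" "hgraph_iso G (standard_hgraph (card (nodes G)) p)"
proof -
  have G: "pseudo_3_regular G" "card (free_edges G) = n" using assms by (auto simp: surface_graph_def)
  then have "wf_hgraph G" "connected_hgraph G" by (auto simp: pseudo_3_regular_def split: prod.splits)
  obtain p0 where "p0 \<in> involutions {0..<3 * card (nodes G)} n"
    "hgraph_iso G (standard_hgraph (card (nodes G)) p0)"
    using pseudo_3_regular_iso_standard[OF G(1)] G(2) by blast
  from bfs_ordered_exists[OF \<open>wf_hgraph G\<close> \<open>connected_hgraph G\<close> this] that show ?thesis
    by (auto simp: bfs_pairing_def)
qed

lemma hgraph_iso_Image_eq:
  assumes "wf_hgraph G" "hgraph_iso G G'"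
  shows "{(G1, G2). hgraph_iso G1 G2} `` {G} = {(G1, G2). hgraph_iso G1 G2} `` {G'}"
  using assms hgraph_iso_trans hgraph_iso_sym by blast

lemma num_surface_graphs_le_card_bfs_pairings:
  assumes "k + 2 = n + 2 * g"
  shows "num_surface_graphs g n \<le> card {p. bfs_pairing k n p}"
proof -
  let ?R = "{(G1, G2). hgraph_iso G1 G2}"
  have "{G. surface_graph g n G} // ?R \<subseteq> (\<lambda>p. ?R `` {standard_hgraph k p}) ` {p. bfs_pairing k n p}"
  proof
    fix X assume "X \<in> {G. surface_graph g n G} // ?R"
    then obtain G where G: "surface_graph g n G" "X = ?R `` {G}" by (auto elim: quotientE)
    have k: "card (nodes G) = k" using surface_graph_card_nodes(1)[OF G(1)] assms by simp
    have "wf_hgraph G"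
      using G(1) by (auto simp: surface_graph_def pseudo_3_regular_def split: prod.splits)
    obtain p where p: "bfs_pairing k n p" "hgraph_iso G (standard_hgraph k p)"
      using surface_graph_iso_bfs_pairing[OF G(1)] unfolding k by blast
    then have "X = ?R `` {standard_hgraph k p}"
      using G(2) hgraph_iso_Image_eq[OF \<open>wf_hgraph G\<close> p(2)] by simp
    then show "X \<in> (\<lambda>p. ?R `` {standard_hgraph k p}) ` {p. bfs_pairing k n p}" using p(1) by blast
  qed
  then have "num_surface_graphs g n \<le> card ((\<lambda>p. ?R `` {standard_hgraph k p}) ` {p. bfs_pairing k n p})"
    unfolding num_surface_graphs_def by (intro card_mono finite_imageI finite_bfs_pairings)
  also have "\<dots> \<le> card {p. bfs_pairing k n p}" by (rule card_image_le[OF finite_bfs_pairings])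
  finally show ?thesis .
qed

theorem proposition2p4:
  fixes g n :: nat
  assumes "n \<ge> 1"
  shows "num_surface_graphs g n \<le> n * g ^ (3 * g) * (3 * g + 3 * n - 3) ^ n"
proof (cases "2 * g + n \<ge> 3")
  case True
  define k where "k = 2 * g + n - 2"
  have k: "k \<ge> 1" "k + 2 = n + 2 * g" using True by (simp_all add: k_def)
  define X :: nat where "X = fact (k - 1) * (fact n * 2 ^ g * fact g)"
  have "card {p. bfs_pairing k n p} * X \<le> fact (2 * k + 1)"
    unfolding X_def by (rule card_bfs_pairings_le[OF k])
  also have "\<dots> \<le> surface_graph_bound g n * X"
    using factorial_estimate_holds[OF assms k(1)] k by (simp add: factorial_estimate_def X_def ac_simps)
  finally have "card {p. bfs_pairing k n p} \<le> surface_graph_bound g n" by (simp add: X_def)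
  then show ?thesis
    using num_surface_graphs_le_card_bfs_pairings[OF k(2)] by (simp add: surface_graph_bound_def)
next
  case False
  then have no_graphs: "{G. surface_graph g n G} = {}" using surface_graph_card_nodes by fastforce
  show ?thesis unfolding num_surface_graphs_def no_graphs by simp
qed

end
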